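(* Let $R$ be a finite group, let $S\subseteq R$ and let $K,H$ be subgroups with $1<K<H<R$. Suppose that (1) $K$ is characteristic in $R$, (2) $K$ is maximal in $H$, (3) $K(S\setminus H)=S\setminus H$, and (4) $K(S\setminus K)\neq S\setminus K$. Then $\mathrm{Aut}(R)_S$ normalises $H$ (i.e. every automorphism of $R$ fixing $S$ setwise maps $H$ to itself).
   Context: $\mathrm{Aut}(R)_S$ denotes the group of automorphisms of $R$ that fix the subset $S$ setwise. *)

theory Defs
  imports "HOL-Algebra.Algebra"
begin

text \<open>Automorphisms of a group R (as group isomorphisms R to R; only their
  behaviour on the carrier matters).\<close>
definition Aut :: "('a, 'b) monoid_scheme \<Rightarrow> ('a \<Rightarrow> 'a) set" where
  "Aut R = iso R R"

definition Aut_stab :: "('a, 'b) monoid_scheme \<Rightarrow> 'a set \<Rightarrow> ('a \<Rightarrow> 'a) set" where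
  "Aut_stab R S = {f \<in> Aut R. f ` S = S}"

definition characteristic :: "'a set \<Rightarrow> ('a, 'b) monoid_scheme \<Rightarrow> bool" where
  "characteristic K R \<longleftrightarrow> subgroup K R \<and> (\<forall>f\<in>Aut R. f ` K = K)"

definition maximal_in :: "'a set \<Rightarrow> 'a set \<Rightarrow> ('a, 'b) monoid_scheme \<Rightarrow> bool" where
  "maximal_in K H R \<longleftrightarrow> subgroup K R \<and> subgroup H R \<and> K \<subset> H \<and>
     (\<forall>L. subgroup L R \<and> K \<subseteq> L \<and> L \<subseteq> H \<longrightarrow> L = K \<or> L = H)"

end

theory Submission
  imports Defs
begin

text \<open>By (4) there are \<open>k \<in> K\<close> and \<open>x \<in> S - K\<close> with \<open>k x \<notin> S\<close>; by (3) such an \<open>x\<close>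
  must lie in \<open>H\<close>. An automorphism \<open>f\<close> fixing \<open>S\<close> and the characteristic subgroup \<open>K\<close>
  carries (3) over to \<open>f H\<close>, so \<open>x \<in> f H\<close> as well. Hence \<open>H \<inter> f H\<close> is a subgroup
  between \<open>K\<close> and \<open>H\<close> that is strictly larger than \<open>K\<close>, so by maximality \<open>H \<subseteq> f H\<close>,
  and \<open>f H = H\<close> because \<open>H\<close> is finite.\<close>

lemma (in group) set_mult_diff_not_invariant_witness:
  assumes "subgroup K G" and "S \<subseteq> carrier G" and "K <#> (S - K) \<noteq> S - K"
  obtains k x where "k \<in> K" and "x \<in> S - K" and "k \<otimes> x \<notin> S"
proof -
  have "S - K \<subseteq> K <#> (S - K)"
  proof
    fix x assume x: "x \<in> S - K"
    then have "x = \<one> \<otimes> x" using assms(2) by auto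
    then show "x \<in> K <#> (S - K)"
      using x subgroup.one_closed[OF assms(1)] unfolding set_mult_def by blast
  qed
  then obtain k x where k: "k \<in> K" and x: "x \<in> S - K" and kx: "k \<otimes> x \<notin> S - K"
    using assms(3) unfolding set_mult_def by blast
  have "k \<otimes> x \<notin> K"
  proof
    assume "k \<otimes> x \<in> K"
    then have "inv k \<otimes> (k \<otimes> x) \<in> K"
      using k assms(1) by (meson subgroup.m_closed subgroup.m_inv_closed)
    moreover have "inv k \<otimes> (k \<otimes> x) = x"
      using k x assms subgroup.subset by (metis DiffD1 inv_solve_left m_closed subsetD)
    ultimately show False using x by simp
  qed
  with kx have "k \<otimes> x \<notin> S" by blast
  with k x show thesis by (rule that)
qed

lemma mem_if_set_mult_diff_invariant:
  assumes "K <#>\<^bsub>G\<^esub> (S - H) = S - H" and "k \<in> K" and "x \<in> S" and "k \<otimes>\<^bsub>G\<^esub> x \<notin> S"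
  shows "x \<in> H"
proof (rule ccontr)
  assume "x \<notin> H"
  with assms(2,3) have "k \<otimes>\<^bsub>G\<^esub> x \<in> K <#>\<^bsub>G\<^esub> (S - H)" unfolding set_mult_def by blast
  with assms(1,4) show False by blast
qed

lemma set_mult_diff_invariant_image_iso:
  assumes "f \<in> iso G G" and "f ` K = K" and "f ` S = S"
    and "K <#>\<^bsub>G\<^esub> (S - H) = S - H"
    and "K \<subseteq> carrier G" and "S \<subseteq> carrier G" and "H \<subseteq> carrier G"
  shows "K <#>\<^bsub>G\<^esub> (S - f ` H) = S - f ` H"
proof -
  have inj: "inj_on f (carrier G)" using assms(1) by (simp add: iso_iff)
  have image_diff: "f ` (S - H) = S - f ` H"
    using inj_on_image_set_diff[OF inj, of S H] assms(3,6,7) by auto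
  have "f ` (K <#>\<^bsub>G\<^esub> (S - H)) = f ` K <#>\<^bsub>G\<^esub> f ` (S - H)"
    by (rule set_mult_hom) (use assms(1,5,6) in \<open>auto simp: iso_iff\<close>)
  then have "K <#>\<^bsub>G\<^esub> (S - f ` H) = f ` (K <#>\<^bsub>G\<^esub> (S - H))"
    using assms(2) image_diff by simp
  also have "\<dots> = S - f ` H" using assms(4) image_diff by simp
  finally show ?thesis .
qed

lemma (in group) maximal_in_subset_if_meets:
  assumes "maximal_in K H G" and "subgroup L G" and "K \<subseteq> L"
    and "x \<in> H \<inter> L" and "x \<notin> K"
  shows "H \<subseteq> L"
proof -
  have "subgroup (H \<inter> L) G" "K \<subseteq> H \<inter> L" "H \<inter> L \<noteq> K"
    using assms subgroups_Inter_pair unfolding maximal_in_def by auto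
  then have "H \<inter> L = H" using assms(1) unfolding maximal_in_def by blast
  then show ?thesis by blast
qed

theorem proposition2p4:
  fixes R :: "('a, 'b) monoid_scheme" and S K H :: "'a set"
  assumes "group R" and "finite (carrier R)"
    and "S \<subseteq> carrier R"
    and "subgroup K R" and "subgroup H R"
    and "{\<one>\<^bsub>R\<^esub>} \<subset> K" and "K \<subset> H" and "H \<subset> carrier R"
    and "characteristic K R"
    and "maximal_in K H R"
    and "K <#>\<^bsub>R\<^esub> (S - H) = S - H"
    and "K <#>\<^bsub>R\<^esub> (S - K) \<noteq> S - K"
  shows "\<forall>f \<in> Aut_stab R S. f ` H = H"
proof
  fix f assume "f \<in> Aut_stab R S"
  then have f_iso: "f \<in> iso R R" and f_S: "f ` S = S" by (auto simp: Aut_stab_def Aut_def)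
  have f_K: "f ` K = K" using assms(9) f_iso by (auto simp: characteristic_def Aut_def)
  interpret group R by fact
  have K_sub: "K \<subseteq> carrier R" and H_sub: "H \<subseteq> carrier R"
    using assms(4,5) subgroup.subset by auto
  obtain k x where k: "k \<in> K" and x: "x \<in> S - K" and kx: "k \<otimes>\<^bsub>R\<^esub> x \<notin> S"
    using set_mult_diff_not_invariant_witness assms(3,4,12) by blast
  have "x \<in> H"
    by (rule mem_if_set_mult_diff_invariant[OF assms(11) k _ kx]) (use x in blast)
  moreover have "x \<in> f ` H"
    by (rule mem_if_set_mult_diff_invariant[OF
          set_mult_diff_invariant_image_iso[OF f_iso f_K f_S assms(11) K_sub assms(3) H_sub] k _ kx])
      (use x in blast)
  moreover have "K \<subseteq> f ` H" using assms(7) f_K by (metis image_mono psubset_imp_subset)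
  ultimately have "H \<subseteq> f ` H"
    using maximal_in_subset_if_meets[OF assms(10) subgroup.iso_subgroup[OF assms(5,1,1) f_iso]] x
    by blast
  moreover have "finite (f ` H)"
    using f_iso H_sub assms(2) by (auto simp: iso_iff intro: finite_subset)
  moreover have "card (f ` H) = card H"
    using f_iso H_sub by (auto simp: iso_iff intro: card_image inj_on_subset)
  ultimately show "f ` H = H" by (metis card_subset_eq)
qed

end
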